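(* Let $d\ge2$, $s\in[-\infty,0]$, let $\rho$ be a density matrix on $\mathbb{C}^d$ and $X,Y$ be $d\times d$ Hermitian matrices. Then $I^s(\rho,X)\,I^s(\rho,Y)\ge\frac{1}{16}\left(I^s(\rho,X+Y)-I^s(\rho,X-Y)\right)^2.$
   Context: Write $\rho=\sum_{i}\lambda_i|\psi_i\rangle\langle\psi_i|$ (orthonormal eigenbasis, $\lambda_1\ge\cdots\ge\lambda_d\ge0$). For $-\infty<s<0$ and $a_1,a_2>0$ let $m_s(a_1,a_2)=\left(\frac{a_1^s+a_2^s}{2}\right)^{1/s}$; $m_0(a_1,a_2)=\sqrt{a_1a_2}$; $m_{-\infty}(a_1,a_2)=\min\{a_1,a_2\}$; and $m_s(a,0)=m_s(0,a)=m_s(0,0)=0$. Define $\zeta_\rho^s(X,Y)=\mathrm{Tr}[\rho X^\dagger Y]-\sum_{i,j} m_s(\lambda_i,\lambda_j)\langle\psi_i|X^\dagger|\psi_j\rangle\langle\psi_j|Y|\psi_i\rangle$ and $I^s(\rho,X)=\zeta_\rho^s(X,X)$. *)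

theory Defs
  imports "HOL-Analysis.Analysis" "HOL-Library.Complex_Order"
begin

text \<open>Matrices on \<open>\<complex>^d\<close> are \<open>complex^'n^'n\<close> with \<open>d = CARD('n)\<close>.\<close>

definition adj :: "complex^'n^'n \<Rightarrow> complex^'n^'n" where
  "adj A = (\<chi> i j. cnj (A $ j $ i))"

definition hermitian_mat :: "complex^'n^'n \<Rightarrow> bool" where
  "hermitian_mat A \<longleftrightarrow> adj A = A"

definition braket :: "complex^'n \<Rightarrow> complex^'n \<Rightarrow> complex" where
  "braket u v = (\<Sum>i\<in>UNIV. cnj (u $ i) * v $ i)"

definition density_matrix :: "complex^'n^'n \<Rightarrow> bool" where
  "density_matrix \<rho> \<longleftrightarrow> hermitian_mat \<rho> \<and> (\<forall>v. 0 \<le> braket v (\<rho> *v v)) \<and> trace \<rho> = 1"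

definition spectral_decomp :: "((complex, 'n::{finite,linorder}) vec, 'n) vec \<Rightarrow> ('n \<Rightarrow> real) \<Rightarrow> ('n \<Rightarrow> (complex, 'n) vec) \<Rightarrow> bool" where
  "spectral_decomp \<rho> lam psi \<longleftrightarrow>
     (\<forall>i j. braket (psi i) (psi j) = (if i = j then 1 else 0)) \<and>
     \<rho> = (\<chi> a b. \<Sum>i\<in>UNIV. complex_of_real (lam i) * (psi i $ a) * cnj (psi i $ b)) \<and>
     (\<forall>i j. i \<le> j \<longrightarrow> lam j \<le> lam i) \<and> (\<forall>i. 0 \<le> lam i)"

definition mean_s :: "ereal \<Rightarrow> real \<Rightarrow> real \<Rightarrow> real" where
  "mean_s s a b =
     (if a = 0 \<or> b = 0 then 0
      else if s = -\<infinity> then min a b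
      else if s = 0 then sqrt (a * b)
      else ((a powr real_of_ereal s + b powr real_of_ereal s) / 2) powr (1 / real_of_ereal s))"

definition zeta_s :: "ereal \<Rightarrow> complex^('n::finite)^'n \<Rightarrow> ('n \<Rightarrow> real) \<Rightarrow> ('n \<Rightarrow> complex^'n)
                      \<Rightarrow> complex^'n^'n \<Rightarrow> complex^'n^'n \<Rightarrow> complex" where
  "zeta_s s \<rho> lam psi X Y =
     trace (\<rho> ** adj X ** Y)
     - (\<Sum>i\<in>UNIV. \<Sum>j\<in>UNIV. complex_of_real (mean_s s (lam i) (lam j))
          * braket (psi i) (adj X *v psi j) * braket (psi j) (Y *v psi i))"

definition I_s :: "ereal \<Rightarrow> complex^('n::finite)^'n \<Rightarrow> ('n \<Rightarrow> real) \<Rightarrow> ('n \<Rightarrow> complex^'n)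
                   \<Rightarrow> complex^'n^'n \<Rightarrow> complex" where
  "I_s s \<rho> lam psi X = zeta_s s \<rho> lam psi X X"

end

theory Submission
  imports Defs
begin

text \<open>In the eigenbasis of \<open>\<rho>\<close>, for Hermitian \<open>Z\<close> with entries \<open>Z\<^sub>i\<^sub>j = \<langle>\<psi>\<^sub>i|Z \<psi>\<^sub>j\<rangle>\<close>,
  \<open>I\<^sup>s(\<rho>, Z) = \<Sum>\<^sub>i\<^sub>,\<^sub>j w\<^sub>i\<^sub>j |Z\<^sub>i\<^sub>j|\<^sup>2\<close> with \<open>w\<^sub>i\<^sub>j = (\<lambda>\<^sub>i + \<lambda>\<^sub>j)/2 - m\<^sub>s(\<lambda>\<^sub>i, \<lambda>\<^sub>j)\<close>, and \<open>w\<^sub>i\<^sub>j \<ge> 0\<close>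
  because for \<open>s \<le> 0\<close> the power mean lies below the geometric, hence below the arithmetic mean.
  So \<open>I\<^sup>s(\<rho>, \<cdot>)\<close> is a positive semidefinite quadratic form on the real space of Hermitian
  matrices; \<open>(I\<^sup>s(\<rho>, X + Y) - I\<^sup>s(\<rho>, X - Y))/4\<close> is its polarization, and the claim is the
  Cauchy--Schwarz inequality for it.\<close>

lemma mean_s_le_geometric_mean:
  assumes "0 \<le> a" "0 \<le> b" "s \<le> 0"
  shows "mean_s s a b \<le> sqrt (a * b)"
proof (cases "a = 0 \<or> b = 0 \<or> s = -\<infinity> \<or> s = 0")
  case True
  have "(min a b)\<^sup>2 \<le> a * b"
    using assms by (simp add: power2_eq_square mult_mono)
  then have "min a b \<le> sqrt (a * b)"
    by (rule real_le_rsqrt)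
  then show ?thesis
    using True assms by (auto simp: mean_s_def)
next
  case False
  then have a: "a > 0" and b: "b > 0" using assms by auto
  obtain t where st: "s = ereal t" and t: "t < 0"
    using False assms by (cases s) auto
  have "sqrt (a * b) powr t = sqrt (a powr t * b powr t)"
    using a b by (simp add: powr_half_sqrt[symmetric] powr_mult powr_powr mult.commute)
  also have "\<dots> \<le> (a powr t + b powr t) / 2"
    by (rule arith_geo_mean_sqrt) auto
  finally have "((a powr t + b powr t) / 2) powr (1 / t) \<le> (sqrt (a * b) powr t) powr (1 / t)"
    using a b t by (intro powr_mono2') auto
  also have "\<dots> = sqrt (a * b)"
    using a b t by (simp add: powr_powr)
  finally show ?thesis
    using a b st t by (simp add: mean_s_def)
qed

lemma mean_s_le_arithmetic_mean:
  assumes "0 \<le> a" "0 \<le> b" "s \<le> 0"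
  shows "mean_s s a b \<le> (a + b) / 2"
  using mean_s_le_geometric_mean[OF assms] arith_geo_mean_sqrt[OF assms(1,2)] by linarith

definition orthonormal_vecs :: "('i \<Rightarrow> complex^'n) \<Rightarrow> bool" where
  "orthonormal_vecs psi \<longleftrightarrow> (\<forall>i j. braket (psi i) (psi j) = (if i = j then 1 else 0))"

lemma spectral_decomp_orthonormal: "spectral_decomp \<rho> lam psi \<Longrightarrow> orthonormal_vecs psi"
  unfolding spectral_decomp_def orthonormal_vecs_def by blast

text \<open>The matrix \<open>U\<close> with columns \<open>psi j\<close> satisfies \<open>U\<^sup>* U = 1\<close>, hence \<open>U U\<^sup>* = 1\<close>.\<close>

lemma orthonormal_vecs_completeness:
  fixes psi :: "'n::finite \<Rightarrow> complex^'n"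
  assumes "orthonormal_vecs psi"
  shows "(\<Sum>j\<in>UNIV. psi j $ a * cnj (psi j $ b)) = (if a = b then 1 else 0)"
proof -
  define U where "U = (\<chi> a j. psi j $ a)"
  define V where "V = (\<chi> j b. cnj (psi j $ b))"
  have "V ** U = mat 1"
    using assms unfolding orthonormal_vecs_def matrix_matrix_mult_def mat_def U_def V_def
    by (simp add: vec_eq_iff braket_def)
  then have "U ** V = mat 1"
    using matrix_left_right_inverse by blast
  then have "(U ** V) $ a $ b = mat 1 $ a $ b" by simp
  then show ?thesis
    unfolding matrix_matrix_mult_def mat_def U_def V_def by simp
qed

lemma orthonormal_vecs_expansion:
  fixes psi :: "'n::finite \<Rightarrow> complex^'n"
  assumes "orthonormal_vecs psi"
  shows "w $ c = (\<Sum>j\<in>UNIV. braket (psi j) w * psi j $ c)"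
proof -
  have "(\<Sum>j\<in>UNIV. braket (psi j) w * psi j $ c)
      = (\<Sum>j\<in>UNIV. \<Sum>b\<in>UNIV. w $ b * (psi j $ c * cnj (psi j $ b)))"
    unfolding braket_def by (simp add: sum_distrib_right sum_distrib_left mult_ac)
  also have "\<dots> = (\<Sum>b\<in>UNIV. w $ b * (\<Sum>j\<in>UNIV. psi j $ c * cnj (psi j $ b)))"
    by (subst sum.swap) (simp add: sum_distrib_left)
  also have "\<dots> = w $ c"
    by (simp add: orthonormal_vecs_completeness[OF assms] if_distrib cong: if_cong)
  finally show ?thesis by simp
qed

lemma braket_matrix_vector_mult:
  "braket u (A *v w) = (\<Sum>c\<in>UNIV. (\<Sum>a\<in>UNIV. cnj (u $ a) * A $ a $ c) * w $ c)"
proof -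
  have "braket u (A *v w) = (\<Sum>a\<in>UNIV. \<Sum>c\<in>UNIV. cnj (u $ a) * A $ a $ c * w $ c)"
    unfolding braket_def matrix_vector_mult_def by (simp add: sum_distrib_left mult_ac)
  also have "\<dots> = (\<Sum>c\<in>UNIV. (\<Sum>a\<in>UNIV. cnj (u $ a) * A $ a $ c) * w $ c)"
    by (subst sum.swap) (simp add: sum_distrib_right)
  finally show ?thesis .
qed

lemma braket_matrix_mult_resolution:
  fixes psi :: "'n::finite \<Rightarrow> complex^'n"
  assumes "orthonormal_vecs psi"
  shows "braket u ((A ** B) *v v) = (\<Sum>j\<in>UNIV. braket u (A *v psi j) * braket (psi j) (B *v v))"
proof -
  define w where "w = B *v v"
  define f where "f c = (\<Sum>a\<in>UNIV. cnj (u $ a) * A $ a $ c)" for c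
  have "braket u ((A ** B) *v v) = braket u (A *v w)"
    by (simp add: w_def matrix_vector_mul_assoc)
  also have "\<dots> = (\<Sum>c\<in>UNIV. f c * w $ c)"
    by (simp add: f_def braket_matrix_vector_mult)
  also have "\<dots> = (\<Sum>c\<in>UNIV. \<Sum>j\<in>UNIV. braket (psi j) w * (f c * psi j $ c))"
    by (subst orthonormal_vecs_expansion[OF assms, of w]) (simp add: sum_distrib_left mult_ac)
  also have "\<dots> = (\<Sum>j\<in>UNIV. braket u (A *v psi j) * braket (psi j) w)"
    by (subst sum.swap) (simp add: braket_matrix_vector_mult f_def sum_distrib_left mult_ac)
  finally show ?thesis by (simp add: w_def)
qed

lemma trace_spectral_decomp_mult:
  assumes "spectral_decomp \<rho> lam psi"
  shows "trace (\<rho> ** A) = (\<Sum>i\<in>UNIV. complex_of_real (lam i) * braket (psi i) (A *v psi i))"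
proof -
  have \<rho>: "\<rho> = (\<chi> a b. \<Sum>i\<in>UNIV. complex_of_real (lam i) * (psi i $ a) * cnj (psi i $ b))"
    using assms unfolding spectral_decomp_def by blast
  have "trace (\<rho> ** A) = trace (A ** \<rho>)"
    by (rule trace_mul_sym)
  also have "\<dots> = (\<Sum>b\<in>UNIV. \<Sum>a\<in>UNIV. \<Sum>i\<in>UNIV.
      complex_of_real (lam i) * (psi i $ a) * cnj (psi i $ b) * A $ b $ a)"
    unfolding trace_def matrix_matrix_mult_def by (subst \<rho>) (simp add: sum_distrib_left mult_ac)
  also have "\<dots> = (\<Sum>i\<in>UNIV. \<Sum>b\<in>UNIV. \<Sum>a\<in>UNIV.
      complex_of_real (lam i) * (psi i $ a) * cnj (psi i $ b) * A $ b $ a)"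
    by (subst sum.swap) (rule sum.cong[OF refl], rule sum.swap)
  also have "\<dots> = (\<Sum>i\<in>UNIV. complex_of_real (lam i) * braket (psi i) (A *v psi i))"
    unfolding braket_def matrix_vector_mult_def by (simp add: sum_distrib_left mult_ac)
  finally show ?thesis .
qed

lemma hermitian_mat_add: "hermitian_mat A \<Longrightarrow> hermitian_mat B \<Longrightarrow> hermitian_mat (A + B)"
  unfolding hermitian_mat_def adj_def by (simp add: vec_eq_iff)

lemma hermitian_mat_diff: "hermitian_mat A \<Longrightarrow> hermitian_mat B \<Longrightarrow> hermitian_mat (A - B)"
  unfolding hermitian_mat_def adj_def by (simp add: vec_eq_iff)

lemma braket_matrix_add: "braket u ((A + B) *v v) = braket u (A *v v) + braket u (B *v v)"
  unfolding braket_def by (simp add: matrix_vector_mult_add_rdistrib sum.distrib distrib_left)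

lemma braket_matrix_diff: "braket u ((A - B) *v v) = braket u (A *v v) - braket u (B *v v)"
  unfolding braket_def
  by (simp add: matrix_vector_mult_diff_rdistrib sum_subtractf right_diff_distrib)

lemma braket_hermitian_swap:
  assumes "hermitian_mat Z"
  shows "braket v (Z *v u) = cnj (braket u (Z *v v))"
proof -
  have Z: "cnj (Z $ a $ b) = Z $ b $ a" for a b
    using assms unfolding hermitian_mat_def adj_def by (metis vec_lambda_beta)
  have "cnj (braket u (Z *v v)) = (\<Sum>a\<in>UNIV. \<Sum>b\<in>UNIV. u $ a * Z $ b $ a * cnj (v $ b))"
    unfolding braket_def matrix_vector_mult_def by (simp add: sum_distrib_left Z mult_ac)
  also have "\<dots> = braket v (Z *v u)"
    unfolding braket_def matrix_vector_mult_def
    by (subst sum.swap) (simp add: sum_distrib_left mult_ac)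
  finally show ?thesis by simp
qed

lemma sum_symmetric_weight_average:
  fixes f :: "'a \<Rightarrow> real"
  assumes "finite A" and "\<And>i j. c i j = c j i"
  shows "(\<Sum>i\<in>A. \<Sum>j\<in>A. f i * c i j) = (\<Sum>i\<in>A. \<Sum>j\<in>A. (f i + f j) / 2 * c i j)"
proof -
  have "(\<Sum>i\<in>A. \<Sum>j\<in>A. f j * c i j) = (\<Sum>i\<in>A. \<Sum>j\<in>A. f i * c i j)"
    by (subst sum.swap) (simp add: assms(2))
  then show ?thesis
    by (simp add: add_divide_distrib distrib_right sum.distrib sum_divide_distrib[symmetric])
qed

lemma weighted_polarization_Cauchy_Schwarz:
  fixes a b :: "'p \<Rightarrow> complex"
  assumes w: "\<And>p. p \<in> I \<Longrightarrow> 0 \<le> w p"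
  shows "((\<Sum>p\<in>I. w p * (cmod (a p + b p))\<^sup>2) - (\<Sum>p\<in>I. w p * (cmod (a p - b p))\<^sup>2))\<^sup>2 / 16
     \<le> (\<Sum>p\<in>I. w p * (cmod (a p))\<^sup>2) * (\<Sum>p\<in>I. w p * (cmod (b p))\<^sup>2)"
proof -
  have polar: "(cmod (x + y))\<^sup>2 - (cmod (x - y))\<^sup>2 = 4 * Re (x * cnj y)" for x y :: complex
    by (simp add: cmod_power2 power2_sum power2_diff algebra_simps)
  have term_le: "\<bar>w p * Re (a p * cnj (b p))\<bar> \<le> (sqrt (w p) * cmod (a p)) * (sqrt (w p) * cmod (b p))"
    if "p \<in> I" for p
  proof -
    have "\<bar>Re (a p * cnj (b p))\<bar> \<le> cmod (a p) * cmod (b p)"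
      by (metis abs_Re_le_cmod complex_mod_cnj norm_mult)
    then have "\<bar>w p * Re (a p * cnj (b p))\<bar> \<le> w p * (cmod (a p) * cmod (b p))"
      using w[OF that] by (simp add: abs_mult mult_left_mono)
    also have "\<dots> = (sqrt (w p) * cmod (a p)) * (sqrt (w p) * cmod (b p))"
      using w[OF that] by (simp add: mult_ac)
    finally show ?thesis .
  qed
  have "(\<Sum>p\<in>I. w p * (cmod (a p + b p))\<^sup>2) - (\<Sum>p\<in>I. w p * (cmod (a p - b p))\<^sup>2)
      = 4 * (\<Sum>p\<in>I. w p * Re (a p * cnj (b p)))"
    by (simp add: sum_subtractf[symmetric] sum_distrib_left right_diff_distrib[symmetric] polar mult_ac)
  then have "((\<Sum>p\<in>I. w p * (cmod (a p + b p))\<^sup>2) - (\<Sum>p\<in>I. w p * (cmod (a p - b p))\<^sup>2))\<^sup>2 / 16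
      = (\<Sum>p\<in>I. w p * Re (a p * cnj (b p)))\<^sup>2"
    by (simp add: power2_eq_square)
  also have "\<dots> \<le> (\<Sum>p\<in>I. (sqrt (w p) * cmod (a p)) * (sqrt (w p) * cmod (b p)))\<^sup>2"
  proof -
    have "\<bar>\<Sum>p\<in>I. w p * Re (a p * cnj (b p))\<bar> \<le> (\<Sum>p\<in>I. \<bar>w p * Re (a p * cnj (b p))\<bar>)"
      by (rule sum_abs)
    also have "\<dots> \<le> (\<Sum>p\<in>I. (sqrt (w p) * cmod (a p)) * (sqrt (w p) * cmod (b p)))"
      by (rule sum_mono) (rule term_le)
    finally show ?thesis
      by (simp only: abs_le_square_iff[symmetric])
  qed
  also have "\<dots> \<le> (\<Sum>p\<in>I. (sqrt (w p) * cmod (a p))\<^sup>2) * (\<Sum>p\<in>I. (sqrt (w p) * cmod (b p))\<^sup>2)"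
    by (rule Cauchy_Schwarz_ineq_sum)
  also have "\<dots> = (\<Sum>p\<in>I. w p * (cmod (a p))\<^sup>2) * (\<Sum>p\<in>I. w p * (cmod (b p))\<^sup>2)"
    using w by (simp add: power_mult_distrib)
  finally show ?thesis .
qed

lemma I_s_hermitian_eq_weighted_sum:
  assumes sd: "spectral_decomp \<rho> lam psi" and Z: "hermitian_mat Z"
  shows "I_s s \<rho> lam psi Z = complex_of_real (\<Sum>i\<in>UNIV. \<Sum>j\<in>UNIV.
     ((lam i + lam j) / 2 - mean_s s (lam i) (lam j)) * (cmod (braket (psi i) (Z *v psi j)))\<^sup>2)"
proof -
  define z where "z i j = braket (psi i) (Z *v psi j)" for i j
  define c where "c i j = (cmod (z i j))\<^sup>2" for i j
  have adj: "adj Z = Z"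
    using Z unfolding hermitian_mat_def .
  have zz: "z i j * z j i = complex_of_real (c i j)" for i j
    unfolding z_def c_def braket_hermitian_swap[OF Z, of "psi j"]
    by (simp add: complex_norm_square[symmetric])
  have c_sym: "c i j = c j i" for i j
    unfolding c_def z_def braket_hermitian_swap[OF Z, of "psi j"] by simp
  have "trace (\<rho> ** Z ** Z) = (\<Sum>i\<in>UNIV. \<Sum>j\<in>UNIV. complex_of_real (lam i * c i j))"
    unfolding matrix_mul_assoc[symmetric] trace_spectral_decomp_mult[OF sd]
      braket_matrix_mult_resolution[OF spectral_decomp_orthonormal[OF sd]]
    by (simp add: sum_distrib_left z_def[symmetric] zz)
  then have "I_s s \<rho> lam psi Z
      = complex_of_real (\<Sum>i\<in>UNIV. \<Sum>j\<in>UNIV. (lam i - mean_s s (lam i) (lam j)) * c i j)"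
    unfolding I_s_def zeta_s_def adj
    by (simp add: z_def[symmetric] mult.assoc zz sum_subtractf left_diff_distrib)
  also have "\<dots> = complex_of_real (\<Sum>i\<in>UNIV. \<Sum>j\<in>UNIV.
      ((lam i + lam j) / 2 - mean_s s (lam i) (lam j)) * c i j)"
    using sum_symmetric_weight_average[of UNIV c lam, OF finite c_sym]
    by (simp add: left_diff_distrib sum_subtractf)
  finally show ?thesis
    unfolding c_def z_def .
qed

theorem theorem5:
  fixes \<rho> X Y :: "((complex, 'n::{finite,linorder}) vec, 'n) vec"
    and lam :: "'n \<Rightarrow> real" and psi :: "'n \<Rightarrow> (complex, 'n) vec"
    and s :: ereal
  assumes "CARD('n) \<ge> 2"
    and "s \<le> 0"
    and "density_matrix \<rho>"
    and "spectral_decomp \<rho> lam psi"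
    and "hermitian_mat X" and "hermitian_mat Y"
  shows "(I_s s \<rho> lam psi (X + Y) - I_s s \<rho> lam psi (X - Y))\<^sup>2 / 16
           \<le> I_s s \<rho> lam psi X * I_s s \<rho> lam psi Y"
proof -
  define w where "w p = (lam (fst p) + lam (snd p)) / 2 - mean_s s (lam (fst p)) (lam (snd p))" for p
  define Q where "Q Z = (\<Sum>p\<in>UNIV. w p * (cmod (braket (psi (fst p)) (Z *v psi (snd p))))\<^sup>2)" for Z
  have I_Q: "I_s s \<rho> lam psi Z = complex_of_real (Q Z)" if "hermitian_mat Z" for Z
    unfolding I_s_hermitian_eq_weighted_sum[OF assms(4) that] Q_def w_def
    by (simp add: sum.cartesian_product split_beta)
  have "0 \<le> w p" for p
    using assms(2,4) mean_s_le_arithmetic_mean unfolding w_def spectral_decomp_def by simp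
  then have "(Q (X + Y) - Q (X - Y))\<^sup>2 / 16 \<le> Q X * Q Y"
    unfolding Q_def braket_matrix_add braket_matrix_diff
    by (rule weighted_polarization_Cauchy_Schwarz)
  then show ?thesis
    using assms(5,6)
    by (simp add: I_Q hermitian_mat_add hermitian_mat_diff less_eq_complex_def power2_eq_square)
qed

end
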